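(* Let $\gamma\in\{0\}\cup(0,\infty)\cup\{\infty\}$. The dual problem $$\sup_{q\in S^n_\infty,\ \rho^1,\rho^2\in[0,\gamma]^n}\ \sum_{x\in V}\min_{i\in I}\Big(C_i(x)+(\mathrm{div}_wq_i)(x)+\rho_i^2-\rho_i^1\Big)+\sum_{i=1}^n(\rho_i^1S_i^\ell-\rho_i^2S_i^u)$$ is equivalent to (has the same optimal value as) the max-flow problem $$\sup_{p_s,p,q,\rho^1,\rho^2}\ \sum_{x\in V}p_s(x)+\sum_{i=1}^n(\rho_i^1S_i^\ell-\rho_i^2S_i^u)$$ over $p_s:V\to\mathbb{R}$, $p_i:V\to\mathbb{R}$, $q_i:V\times V\to\mathbb{R}$, $\rho_i^1,\rho_i^2\in\mathbb{R}$, subject to, for all $i\in I$: $|q_i(x,y)|\le1$ for all $(x,y)$ with $\{x,y\}\in E$; $p_i(x)\le C_i(x)$ for all $x\in V$; $(\mathrm{div}_wq_i)(x)-p_s(x)+p_i(x)=\rho_i^1-\rho_i^2$ for all $x\in V$; and $0\le\rho_i^1,\rho_i^2\le\gamma$.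
   Context: Let $G=(V,E)$ be a finite undirected graph with symmetric weights $w(x,y)=w(y,x)>0$ for $\{x,y\}\in E$ and $w(x,y)=0$ otherwise. For $\phi:V\times V\to\mathbb{R}$, $(\mathrm{div}_w\phi)(x)=\frac12\sum_{y\in V}w(x,y)(\phi(x,y)-\phi(y,x))$ (so only values on ordered pairs $(x,y)$ with $\{x,y\}\in E$ matter), $\|\phi\|_\infty=\max_{x,y}|\phi(x,y)|$, and $S^n_\infty=\{(q_1,\dots,q_n):q_i:V\times V\to\mathbb{R},\ \|q_i\|_\infty\le1\}$. Let $n\ge2$, $I=\{1,\dots,n\}$, $C_i:V\to\mathbb{R}$ given. Size bounds are integers $0\le S_i^\ell\le S_i^u$ with $\sum_iS_i^\ell\le|V|\le\sum_iS_i^u$. For $\gamma=\infty$, the interval $[0,\gamma]$ means $[0,\infty)$. *)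

theory Defs
  imports "HOL-Analysis.Analysis"
begin

definition div_w :: "'v set \<Rightarrow> ('v \<Rightarrow> 'v \<Rightarrow> real) \<Rightarrow> ('v \<Rightarrow> 'v \<Rightarrow> real) \<Rightarrow> 'v \<Rightarrow> real" where
  "div_w V w \<phi> x = (1/2) * (\<Sum>y\<in>V. w x y * (\<phi> x y - \<phi> y x))"

text \<open>Optimal value of the dual problem (supremum in the extended reals).
  Indices I = {1..n}; q ranges over S^n_infinity (sup norm over V x V at most 1);
  rho^1, rho^2 in [0,gamma]^n.\<close>
definition dual_value ::
  "'v set \<Rightarrow> ('v \<Rightarrow> 'v \<Rightarrow> real) \<Rightarrow> nat \<Rightarrow> (nat \<Rightarrow> 'v \<Rightarrow> real) \<Rightarrow> (nat \<Rightarrow> nat) \<Rightarrow> (nat \<Rightarrow> nat) \<Rightarrow> ereal \<Rightarrow> ereal" where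
  "dual_value V w n C Sl Su \<gamma> = Sup {ereal ((\<Sum>x\<in>V. Min ((\<lambda>i. C i x + div_w V w (q i) x + \<rho>2 i - \<rho>1 i) ` {1..n}))
        + (\<Sum>i=1..n. \<rho>1 i * real (Sl i) - \<rho>2 i * real (Su i)))
     | q \<rho>1 \<rho>2. (\<forall>i\<in>{1..n}. \<forall>x\<in>V. \<forall>y\<in>V. \<bar>q i x y\<bar> \<le> 1)
        \<and> (\<forall>i\<in>{1..n}. 0 \<le> \<rho>1 i \<and> ereal (\<rho>1 i) \<le> \<gamma> \<and> 0 \<le> \<rho>2 i \<and> ereal (\<rho>2 i) \<le> \<gamma>)}"

definition maxflow_value ::
  "'v set \<Rightarrow> 'v set set \<Rightarrow> ('v \<Rightarrow> 'v \<Rightarrow> real) \<Rightarrow> nat \<Rightarrow> (nat \<Rightarrow> 'v \<Rightarrow> real) \<Rightarrow> (nat \<Rightarrow> nat) \<Rightarrow> (nat \<Rightarrow> nat) \<Rightarrow> ereal \<Rightarrow> ereal" where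
  "maxflow_value V E w n C Sl Su \<gamma> = Sup {ereal ((\<Sum>x\<in>V. ps x) + (\<Sum>i=1..n. \<rho>1 i * real (Sl i) - \<rho>2 i * real (Su i)))
     | ps p q \<rho>1 \<rho>2. (\<forall>i\<in>{1..n}.
          (\<forall>x\<in>V. \<forall>y\<in>V. {x, y} \<in> E \<longrightarrow> \<bar>q i x y\<bar> \<le> 1)
        \<and> (\<forall>x\<in>V. p i x \<le> C i x)
        \<and> (\<forall>x\<in>V. div_w V w (q i) x - ps x + p i x = \<rho>1 i - \<rho>2 i)
        \<and> 0 \<le> \<rho>1 i \<and> ereal (\<rho>1 i) \<le> \<gamma> \<and> 0 \<le> \<rho>2 i \<and> ereal (\<rho>2 i) \<le> \<gamma>)}"

end

theory Submission
  imports Defs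
begin

text \<open>The two problems differ only by a change of variables. Given a dual point (q, \<rho>), the source
  flow p_s(x) = min_i (C_i(x) + div_w q_i(x) + \<rho>_i^2 - \<rho>_i^1) together with the sink flows
  p_i forced by flow conservation is feasible for the max-flow problem and has the same value.
  Conversely, flow conservation and p_i \<le> C_i bound any feasible p_s pointwise by that minimum;
  since w vanishes off E, the flows q_i may be set to 0 off E, which makes them dual feasible
  without changing any divergence. The size bounds S_i are irrelevant to the equivalence.\<close>

lemma div_w_cong:
  assumes "\<And>y. y \<in> V \<Longrightarrow> w x y \<noteq> 0 \<Longrightarrow> q x y = q' x y \<and> q y x = q' y x"
  shows "div_w V w q x = div_w V w q' x"
  unfolding div_w_def by (rule arg_cong[where f="\<lambda>s. (1/2) * s"], rule sum.cong) (auto dest: assms)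

lemma div_w_restrict_edges:
  assumes "x \<in> V" and "\<forall>x\<in>V. \<forall>y\<in>V. {x, y} \<notin> E \<longrightarrow> w x y = 0"
  shows "div_w V w (\<lambda>x y. if {x, y} \<in> E then q x y else 0) x = div_w V w q x"
proof (rule div_w_cong)
  fix y assume "y \<in> V" "w x y \<noteq> 0"
  then have "{x, y} \<in> E" "{y, x} \<in> E" using assms by (auto simp: insert_commute)
  then show "(if {x, y} \<in> E then q x y else 0) = q x y \<and> (if {y, x} \<in> E then q y x else 0) = q y x"
    by simp
qed

lemma dual_value_le_maxflow_value:
  fixes V :: "'v set" and w :: "'v \<Rightarrow> 'v \<Rightarrow> real"
  shows "dual_value V w n C Sl Su \<gamma> \<le> maxflow_value V E w n C Sl Su \<gamma>"
  unfolding dual_value_def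
proof (rule Sup_least, clarify)
  fix q :: "nat \<Rightarrow> 'v \<Rightarrow> 'v \<Rightarrow> real" and \<rho>1 \<rho>2 :: "nat \<Rightarrow> real"
  assume q: "\<forall>i\<in>{1..n}. \<forall>x\<in>V. \<forall>y\<in>V. \<bar>q i x y\<bar> \<le> 1"
    and \<rho>: "\<forall>i\<in>{1..n}. 0 \<le> \<rho>1 i \<and> ereal (\<rho>1 i) \<le> \<gamma> \<and> 0 \<le> \<rho>2 i \<and> ereal (\<rho>2 i) \<le> \<gamma>"
  define ps where "ps x = Min ((\<lambda>i. C i x + div_w V w (q i) x + \<rho>2 i - \<rho>1 i) ` {1..n})" for x
  define p where "p i x = \<rho>1 i - \<rho>2 i - div_w V w (q i) x + ps x" for i x
  have sink_capacity: "p i x \<le> C i x" if "i \<in> {1..n}" for i x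
  proof -
    have "ps x \<le> C i x + div_w V w (q i) x + \<rho>2 i - \<rho>1 i"
      unfolding ps_def using that by (intro Min_le) auto
    then show ?thesis by (simp add: p_def)
  qed
  have "\<forall>i\<in>{1..n}.
          (\<forall>x\<in>V. \<forall>y\<in>V. {x, y} \<in> E \<longrightarrow> \<bar>q i x y\<bar> \<le> 1)
        \<and> (\<forall>x\<in>V. p i x \<le> C i x)
        \<and> (\<forall>x\<in>V. div_w V w (q i) x - ps x + p i x = \<rho>1 i - \<rho>2 i)
        \<and> 0 \<le> \<rho>1 i \<and> ereal (\<rho>1 i) \<le> \<gamma> \<and> 0 \<le> \<rho>2 i \<and> ereal (\<rho>2 i) \<le> \<gamma>"
    using q \<rho> sink_capacity by (auto simp: p_def)
  then show "ereal ((\<Sum>x\<in>V. Min ((\<lambda>i. C i x + div_w V w (q i) x + \<rho>2 i - \<rho>1 i) ` {1..n}))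
      + (\<Sum>i=1..n. \<rho>1 i * real (Sl i) - \<rho>2 i * real (Su i))) \<le> maxflow_value V E w n C Sl Su \<gamma>"
    unfolding maxflow_value_def ps_def by (intro Sup_upper) blast
qed

lemma maxflow_value_le_dual_value:
  fixes V :: "'v set" and w :: "'v \<Rightarrow> 'v \<Rightarrow> real"
  assumes "n \<ge> 1" and weight_off_edges: "\<forall>x\<in>V. \<forall>y\<in>V. {x, y} \<notin> E \<longrightarrow> w x y = 0"
  shows "maxflow_value V E w n C Sl Su \<gamma> \<le> dual_value V w n C Sl Su \<gamma>"
  unfolding maxflow_value_def
proof (rule Sup_least, clarify)
  fix ps :: "'v \<Rightarrow> real" and p :: "nat \<Rightarrow> 'v \<Rightarrow> real" and q :: "nat \<Rightarrow> 'v \<Rightarrow> 'v \<Rightarrow> real"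
    and \<rho>1 \<rho>2 :: "nat \<Rightarrow> real"
  assume feasible: "\<forall>i\<in>{1..n}.
          (\<forall>x\<in>V. \<forall>y\<in>V. {x, y} \<in> E \<longrightarrow> \<bar>q i x y\<bar> \<le> 1)
        \<and> (\<forall>x\<in>V. p i x \<le> C i x)
        \<and> (\<forall>x\<in>V. div_w V w (q i) x - ps x + p i x = \<rho>1 i - \<rho>2 i)
        \<and> 0 \<le> \<rho>1 i \<and> ereal (\<rho>1 i) \<le> \<gamma> \<and> 0 \<le> \<rho>2 i \<and> ereal (\<rho>2 i) \<le> \<gamma>"
  define q' where "q' i x y = (if {x, y} \<in> E then q i x y else 0)" for i x y
  have div_q': "div_w V w (q' i) x = div_w V w (q i) x" if "x \<in> V" for i x
    unfolding q'_def using div_w_restrict_edges[OF that weight_off_edges] .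
  have source_le_Min:
    "ps x \<le> Min ((\<lambda>i. C i x + div_w V w (q' i) x + \<rho>2 i - \<rho>1 i) ` {1..n})" if "x \<in> V" for x
  proof (subst Min_ge_iff; (intro ballI)?)
    fix c assume "c \<in> (\<lambda>i. C i x + div_w V w (q' i) x + \<rho>2 i - \<rho>1 i) ` {1..n}"
    then obtain i where i: "i \<in> {1..n}" and c: "c = C i x + div_w V w (q' i) x + \<rho>2 i - \<rho>1 i" by blast
    have "p i x \<le> C i x" "div_w V w (q i) x - ps x + p i x = \<rho>1 i - \<rho>2 i"
      using feasible i \<open>x \<in> V\<close> by auto
    then show "ps x \<le> c" using c div_q'[OF \<open>x \<in> V\<close>] by simp
  qed (use assms(1) in auto)
  have "ereal ((\<Sum>x\<in>V. ps x) + (\<Sum>i=1..n. \<rho>1 i * real (Sl i) - \<rho>2 i * real (Su i)))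
      \<le> ereal ((\<Sum>x\<in>V. Min ((\<lambda>i. C i x + div_w V w (q' i) x + \<rho>2 i - \<rho>1 i) ` {1..n}))
          + (\<Sum>i=1..n. \<rho>1 i * real (Sl i) - \<rho>2 i * real (Su i)))"
    using source_le_Min by (simp add: sum_mono)
  also have "\<dots> \<le> dual_value V w n C Sl Su \<gamma>"
  proof -
    have "\<forall>i\<in>{1..n}. \<forall>x\<in>V. \<forall>y\<in>V. \<bar>q' i x y\<bar> \<le> 1"
      using feasible by (auto simp: q'_def)
    then show ?thesis
      unfolding dual_value_def using feasible by (intro Sup_upper) blast
  qed
  finally show "ereal ((\<Sum>x\<in>V. ps x) + (\<Sum>i=1..n. \<rho>1 i * real (Sl i) - \<rho>2 i * real (Su i)))
      \<le> dual_value V w n C Sl Su \<gamma>" .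
qed

theorem proposition2:
  fixes V :: "'v set" and E :: "'v set set" and w :: "'v \<Rightarrow> 'v \<Rightarrow> real"
    and n :: nat and C :: "nat \<Rightarrow> 'v \<Rightarrow> real" and Sl Su :: "nat \<Rightarrow> nat" and \<gamma> :: ereal
  assumes "finite V"
    and "\<forall>e\<in>E. \<exists>x\<in>V. \<exists>y\<in>V. e = {x, y}"
    and "\<forall>x y. w x y = w y x"
    and "\<forall>x\<in>V. \<forall>y\<in>V. {x, y} \<in> E \<longrightarrow> w x y > 0"
    and "\<forall>x\<in>V. \<forall>y\<in>V. {x, y} \<notin> E \<longrightarrow> w x y = 0"
    and "n \<ge> 2"
    and "\<forall>i\<in>{1..n}. Sl i \<le> Su i"
    and "(\<Sum>i=1..n. Sl i) \<le> card V" and "card V \<le> (\<Sum>i=1..n. Su i)"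
    and "\<gamma> \<ge> 0"
  shows "dual_value V w n C Sl Su \<gamma> = maxflow_value V E w n C Sl Su \<gamma>"
proof (rule antisym)
  show "dual_value V w n C Sl Su \<gamma> \<le> maxflow_value V E w n C Sl Su \<gamma>"
    by (rule dual_value_le_maxflow_value)
  show "maxflow_value V E w n C Sl Su \<gamma> \<le> dual_value V w n C Sl Su \<gamma>"
    using assms(5,6) by (intro maxflow_value_le_dual_value) auto
qed

end
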